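(* Let $p>q>1$ be relatively prime integers, let $\mathbf{x}$ be a $\frac pq$-automatic sequence produced by the deterministic finite automaton with output $\mathcal{A}=(Q,q_0,A_p,\delta,\tau)$, and let $T(L_{\frac pq})$ be decorated by $\mathbf{x}$. Then for all $h\ge 1$, the number $\#F_h$ of distinct factors of height $h$ of $T(L_{\frac pq})$ satisfies $\#F_h\le 1+q^h\cdot\#Q$.
   Context: $A_p=\{0,\ldots,p-1\}$; for $w=w_\ell\cdots w_0\in A_p^*$, $\mathrm{val}_{\frac pq}(w)=\sum_{i=0}^{\ell}\frac{w_i}{q}(\frac pq)^i$; $\mathrm{rep}_{\frac pq}(n)$ is the unique word not starting with $0$ of value $n$ ($\mathrm{rep}_{\frac pq}(0)=\varepsilon$); $L_{\frac pq}=\{\mathrm{rep}_{\frac pq}(n):n\ge0\}$. $\mathbf{x}$ is $\frac pq$-automatic via $\mathcal{A}$ if $x_n=\tau(\delta(q_0,\mathrm{rep}_{\frac pq}(n)))$ for all $n$. $T(L_{\frac pq})$ is the tree whose nodes are the words of $L_{\frac pq}$, with an edge labeled $d$ from $w$ to $wd$ whenever $w,wd\in L_{\frac pq}$; node $w$ has decoration $x_{\mathrm{val}_{\frac pq}(w)}$. For $w\in L_{\frac pq}$ and $h\ge0$, the factor $T[w,h]$ has domain $w^{-1}L_{\frac pq}\cap A_p^{\le h}$ and node $u$ of it has decoration $x_{\mathrm{val}_{\frac pq}(wu)}$; two factors of height $h$ are equal if they have the same domain and the same decoration at each node. $F_h=\{T[w,h]: w\in L_{\frac pq}\}$. *)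

theory Defs
  imports Main "HOL.Real"
begin

text \<open>Words are lists, most significant digit first: the word w_l ... w_0 is the
list [w_l, ..., w_0], so w_i is the entry at position (length w - 1 - i).\<close>

definition digits :: "nat \<Rightarrow> nat set" where
  "digits p = {0..<p}"

definition val_pq :: "nat \<Rightarrow> nat \<Rightarrow> nat list \<Rightarrow> real" where
  "val_pq p q w = (\<Sum>i<length w. (real (w ! (length w - 1 - i)) / real q) * (real p / real q) ^ i)"

definition rep_pq :: "nat \<Rightarrow> nat \<Rightarrow> nat \<Rightarrow> nat list" where
  "rep_pq p q n = (THE w. set w \<subseteq> digits p \<and> (w = [] \<or> hd w \<noteq> 0) \<and> val_pq p q w = real n)"

definition L_pq :: "nat \<Rightarrow> nat \<Rightarrow> nat list set" where
  "L_pq p q = {rep_pq p q n | n. True}"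

definition delta_star :: "('s \<Rightarrow> nat \<Rightarrow> 's) \<Rightarrow> 's \<Rightarrow> nat list \<Rightarrow> 's" where
  "delta_star \<delta> s w = foldl \<delta> s w"

definition pq_automatic_via ::
  "nat \<Rightarrow> nat \<Rightarrow> (nat \<Rightarrow> 'b) \<Rightarrow> 's set \<Rightarrow> 's \<Rightarrow> ('s \<Rightarrow> nat \<Rightarrow> 's) \<Rightarrow> ('s \<Rightarrow> 'b) \<Rightarrow> bool" where
  "pq_automatic_via p q x Q q0 \<delta> \<tau> \<longleftrightarrow>
     finite Q \<and> q0 \<in> Q \<and> (\<forall>s\<in>Q. \<forall>d\<in>digits p. \<delta> s d \<in> Q) \<and>
     (\<forall>n. x n = \<tau> (delta_star \<delta> q0 (rep_pq p q n)))"

text \<open>The factor T[w,h] of the tree T(L_{p/q}) decorated by x, as a partial map: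
  its domain is w^{-1}L_{p/q} \<inter> A_p^{\<le>h}, and node u carries x_{val(wu)}
  (val(wu) is a natural number since wu \<in> L_{p/q}).\<close>
definition factor_pq :: "nat \<Rightarrow> nat \<Rightarrow> (nat \<Rightarrow> 'b) \<Rightarrow> nat list \<Rightarrow> nat \<Rightarrow> nat list \<Rightarrow> 'b option" where
  "factor_pq p q x w h = (\<lambda>u.
     if set u \<subseteq> digits p \<and> length u \<le> h \<and> w @ u \<in> L_pq p q
     then Some (x (nat \<lfloor>val_pq p q (w @ u)\<rfloor>)) else None)"

definition F_pq :: "nat \<Rightarrow> nat \<Rightarrow> (nat \<Rightarrow> 'b) \<Rightarrow> nat \<Rightarrow> (nat list \<Rightarrow> 'b option) set" where
  "F_pq p q x h = {factor_pq p q x w h | w. w \<in> L_pq p q}"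

end

theory Submission
  imports Defs
begin

text \<open>For n > 0 write n = val w with w = rep n. A word u is a child path of w in the tree iff
  val (w u) = (p/q)^|u| n + val u is an integer, i.e. iff q^|u| divides p^|u| n + q^|u| val u;
  this depends only on n mod q^|u|. The decoration at w u is the output of the automaton
  started in the state reached on w and fed with u. So for n > 0 the factor T[rep n, h] is
  determined by n mod q^h and that state, and the root rep 0 = [] adds at most one factor.\<close>

lemma val_pq_Nil [simp]: "val_pq p q [] = 0"
  by (simp add: val_pq_def)

lemma val_pq_snoc:
  "val_pq p q (w @ [a]) = real p / real q * val_pq p q w + real a / real q"
proof -
  have "val_pq p q (w @ [a]) =
     (\<Sum>i<Suc (length w). (real ((w @ [a]) ! (length w - i)) / real q) * (real p / real q) ^ i)"
    by (simp add: val_pq_def)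
  also have "\<dots> = real a / real q +
     (\<Sum>i<length w. (real ((w @ [a]) ! (length w - Suc i)) / real q) * (real p / real q) ^ Suc i)"
    by (subst sum.lessThan_Suc_shift) simp
  also have "(\<Sum>i<length w. (real ((w @ [a]) ! (length w - Suc i)) / real q) * (real p / real q) ^ Suc i)
     = real p / real q * (\<Sum>i<length w. (real (w ! (length w - 1 - i)) / real q) * (real p / real q) ^ i)"
    by (subst sum_distrib_left, rule sum.cong) (auto simp: nth_append)
  finally show ?thesis by (simp add: val_pq_def)
qed

lemma val_pq_append:
  "val_pq p q (w @ u) = (real p / real q) ^ length u * val_pq p q w + val_pq p q u"
proof (induction u rule: rev_induct)
  case (snoc a u)
  then show ?case
    using val_pq_snoc[of p q "w @ u" a] by (simp add: val_pq_snoc algebra_simps)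
qed simp

lemma val_pq_nonneg: "val_pq p q w \<ge> 0"
  by (auto simp: val_pq_def intro!: sum_nonneg)

lemma val_pq_times_power_nat: "\<exists>N. val_pq p q w * real q ^ length w = real N"
proof (induction w rule: rev_induct)
  case (snoc a w)
  then obtain N where N: "val_pq p q w * real q ^ length w = real N" by blast
  show ?case
  proof (cases "q = 0")
    case False
    then have "val_pq p q (w @ [a]) * real q ^ length (w @ [a]) = real (p * N + a * q ^ length w)"
      using N by (simp add: val_pq_snoc field_simps)
    then show ?thesis by blast
  qed (auto simp: val_pq_def)
qed simp

definition normalized_word :: "nat \<Rightarrow> nat list \<Rightarrow> bool" where
  "normalized_word p w \<longleftrightarrow> set w \<subseteq> digits p \<and> (w = [] \<or> hd w \<noteq> 0)"

lemma normalized_word_Nil [simp]: "normalized_word p []"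
  by (simp add: normalized_word_def)

lemma normalized_word_append:
  "normalized_word p w \<Longrightarrow> w \<noteq> [] \<Longrightarrow> set u \<subseteq> digits p \<Longrightarrow> normalized_word p (w @ u)"
  by (auto simp: normalized_word_def)

lemma normalized_word_snocD:
  "normalized_word p (w @ [a]) \<Longrightarrow> normalized_word p w \<and> a < p"
  by (auto simp: normalized_word_def digits_def hd_append split: if_splits)

lemma val_pq_pos:
  assumes "0 < p" "0 < q" "normalized_word p w" "w \<noteq> []"
  shows "val_pq p q w > 0"
proof -
  obtain a v where w: "w = [a] @ v" "a \<noteq> 0"
    using assms(3,4) by (cases w) (auto simp: normalized_word_def)
  have "val_pq p q w = (real p / real q) ^ length v * (real a / real q) + val_pq p q v"
    using w val_pq_append[of p q "[a]" v] val_pq_snoc[of p q "[]" a] by simp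
  moreover have "(real p / real q) ^ length v * (real a / real q) > 0"
    using assms w by simp
  ultimately show ?thesis using val_pq_nonneg[of p q v] by linarith
qed

text \<open>Coprimality of p and q is what makes the value of the prefix an integer again.\<close>

lemma val_pq_snoc_eq_nat:
  assumes "coprime p q" "0 < q" "val_pq p q (w @ [a]) = real n"
  shows "\<exists>m. val_pq p q w = real m \<and> q * n = p * m + a"
proof -
  obtain N where N: "val_pq p q w * real q ^ length w = real N"
    using val_pq_times_power_nat by blast
  have pv: "real p * val_pq p q w = real q * real n - real a"
    using assms(2,3) by (simp add: val_pq_snoc field_simps)
  then have "real a \<le> real (q * n)"
    using mult_nonneg_nonneg[OF of_nat_0_le_iff val_pq_nonneg, of p p q w] by simp
  then have "a \<le> q * n"
    by (simp only: of_nat_le_iff)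
  have "real (p * N) = (real p * val_pq p q w) * real q ^ length w"
    using N by (simp add: algebra_simps)
  also have "\<dots> = (real q * real n - real a) * real q ^ length w"
    using pv by simp
  also have "\<dots> = real ((q * n - a) * q ^ length w)"
    using \<open>a \<le> q * n\<close> by (simp add: of_nat_diff)
  finally have "p * N = (q * n - a) * q ^ length w"
    by (simp only: of_nat_eq_iff)
  then have "q ^ length w dvd p * N"
    by simp
  moreover have "coprime (q ^ length w) p"
    using assms(1) by (simp add: coprime_commute)
  ultimately obtain m where "N = q ^ length w * m"
    using coprime_dvd_mult_right_iff by blast
  then have m: "val_pq p q w = real m"
    using N assms(2) by simp
  then have "real (q * n) = real (p * m + a)"
    using pv \<open>a \<le> q * n\<close> by (simp add: of_nat_diff)
  then show ?thesis
    using m by (simp only: of_nat_eq_iff) blast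
qed

lemma normalized_word_val_pq_unique:
  assumes "coprime p q" "0 < q" "q < p"
  shows "normalized_word p w \<Longrightarrow> normalized_word p w' \<Longrightarrow>
    val_pq p q w = real n \<Longrightarrow> val_pq p q w' = real n \<Longrightarrow> w = w'"
proof (induction n arbitrary: w w' rule: less_induct)
  case (less n)
  show ?case
  proof (cases "n = 0")
    case True
    then show ?thesis
      using val_pq_pos[of p q] assms less.prems by (metis less_irrefl of_nat_0 order.strict_trans)
  next
    case False
    then have "w \<noteq> []" "w' \<noteq> []"
      using less.prems by auto
    then obtain v a v' a' where w: "w = v @ [a]" and w': "w' = v' @ [a']"
      by (metis rev_exhaust)
    obtain m m' where m: "val_pq p q v = real m" "q * n = p * m + a"
      and m': "val_pq p q v' = real m'" "q * n = p * m' + a'"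
      using val_pq_snoc_eq_nat[OF assms(1,2)] less.prems w w' by metis
    have v: "normalized_word p v" "a < p" and v': "normalized_word p v'" "a' < p"
      using normalized_word_snocD less.prems w w' by blast+
    have "a = q * n mod p \<and> m = q * n div p"
      unfolding m(2) using v(2) by simp
    moreover have "a' = q * n mod p \<and> m' = q * n div p"
      unfolding m'(2) using v'(2) by simp
    ultimately have same_digit: "a' = a" and same_quotient: "m' = m"
      by simp_all
    have "m < n"
    proof -
      have "p * m \<le> q * n" using m(2) by simp
      also have "q * n < p * n" using assms False by simp
      finally show ?thesis by simp
    qed
    then have "v = v'"
      using less.IH v(1) v'(1) m(1) m'(1) same_quotient by simp
    then show ?thesis
      using w w' same_digit by simp
  qed
qed

lemma normalized_word_val_pq_exists:
  assumes "0 < q" "q < p"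
  shows "\<exists>w. normalized_word p w \<and> val_pq p q w = real n"
proof (induction n rule: less_induct)
  case (less n)
  show ?case
  proof (cases "n = 0")
    case False
    define m a where "m = q * n div p" and "a = q * n mod p"
    have qn: "q * n = p * m + a" and "a < p"
      using assms unfolding m_def a_def by simp_all
    have "m < n"
    proof -
      have "p * m \<le> q * n" using qn by simp
      also have "q * n < p * n" using assms False by simp
      finally show ?thesis by simp
    qed
    then obtain v where v: "normalized_word p v" "val_pq p q v = real m"
      using less.IH by blast
    have "val_pq p q (v @ [a]) = real n"
    proof -
      have "real (q * n) = real (p * m + a)" using qn by simp
      then show ?thesis using assms(1) v by (simp add: val_pq_snoc field_simps)
    qed
    moreover have "normalized_word p (v @ [a])"
    proof (cases "v = []")
      case True
      then have "a = q * n" using v qn by simp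
      then show ?thesis
        using True \<open>a < p\<close> assms False by (simp add: normalized_word_def digits_def)
    qed (use v \<open>a < p\<close> in \<open>auto simp: normalized_word_def digits_def\<close>)
    ultimately show ?thesis by blast
  qed (auto intro: exI[of _ "[]"])
qed

context
  fixes p q :: nat
  assumes coprime: "coprime p q" and q_pos: "0 < q" and q_less_p: "q < p"
begin

lemma rep_pq_eqI: "normalized_word p w \<Longrightarrow> val_pq p q w = real n \<Longrightarrow> rep_pq p q n = w"
  unfolding rep_pq_def
  by (rule the_equality)
    (auto simp: normalized_word_def intro: normalized_word_val_pq_unique[OF coprime q_pos q_less_p])

lemma rep_pq_spec: "normalized_word p (rep_pq p q n) \<and> val_pq p q (rep_pq p q n) = real n"
  using normalized_word_val_pq_exists[OF q_pos q_less_p] rep_pq_eqI by metis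

lemma rep_pq_eq_Nil_iff: "rep_pq p q n = [] \<longleftrightarrow> n = 0"
proof
  assume "rep_pq p q n = []"
  then show "n = 0"
    using rep_pq_spec[of n] by simp
qed (simp add: rep_pq_eqI)

lemma L_pq_iff: "w \<in> L_pq p q \<longleftrightarrow> normalized_word p w \<and> (\<exists>n. val_pq p q w = real n)"
  unfolding L_pq_def using rep_pq_spec rep_pq_eqI by blast

lemma rep_pq_append_in_L_pq_iff_dvd:
  assumes "0 < n" "set u \<subseteq> digits p" "val_pq p q u * real q ^ length u = real U"
  shows "rep_pq p q n @ u \<in> L_pq p q \<longleftrightarrow> q ^ length u dvd p ^ length u * n + U"
proof -
  have "rep_pq p q n \<noteq> []"
    using assms(1) rep_pq_eq_Nil_iff by simp
  then have "normalized_word p (rep_pq p q n @ u)"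
    using normalized_word_append[OF conjunct1[OF rep_pq_spec] _ assms(2)] by blast
  moreover have scaled: "val_pq p q (rep_pq p q n @ u) * real q ^ length u = real (p ^ length u * n + U)"
  proof -
    have "(real p / real q) ^ length u * real q ^ length u = real p ^ length u"
      using q_pos by (simp add: power_divide)
    then show ?thesis
      using assms(3) by (simp add: val_pq_append rep_pq_spec distrib_right)
  qed
  moreover have "(\<exists>m. val_pq p q (rep_pq p q n @ u) = real m) \<longleftrightarrow> q ^ length u dvd p ^ length u * n + U"
  proof
    assume "\<exists>m. val_pq p q (rep_pq p q n @ u) = real m"
    then obtain m where "real (m * q ^ length u) = real (p ^ length u * n + U)"
      using scaled by auto
    then show "q ^ length u dvd p ^ length u * n + U"
      by (metis of_nat_eq_iff dvd_triv_right)
  next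
    assume "q ^ length u dvd p ^ length u * n + U"
    then obtain c where "p ^ length u * n + U = q ^ length u * c" ..
    then have "val_pq p q (rep_pq p q n @ u) * real q ^ length u = real c * real q ^ length u"
      using scaled by simp
    then show "\<exists>m. val_pq p q (rep_pq p q n @ u) = real m"
      using q_pos by auto
  qed
  ultimately show ?thesis
    using L_pq_iff by blast
qed

lemma rep_pq_append_in_L_pq_cong:
  assumes "0 < n" "0 < n'" "n mod q ^ length u = n' mod q ^ length u" "set u \<subseteq> digits p"
  shows "rep_pq p q n @ u \<in> L_pq p q \<longleftrightarrow> rep_pq p q n' @ u \<in> L_pq p q"
proof -
  obtain U where U: "val_pq p q u * real q ^ length u = real U"
    using val_pq_times_power_nat by blast
  have "(p ^ length u * n + U) mod q ^ length u = (p ^ length u * n' + U) mod q ^ length u"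
    using assms(3) by (intro mod_add_cong mod_mult_cong refl)
  then show ?thesis
    using rep_pq_append_in_L_pq_iff_dvd[OF _ assms(4) U] assms(1,2) by (simp add: dvd_eq_mod_eq_0)
qed

lemma factor_pq_rep_pq:
  assumes automatic: "\<And>n. x n = \<tau> (delta_star \<delta> q0 (rep_pq p q n))"
  shows "factor_pq p q x (rep_pq p q n) h u =
    (if set u \<subseteq> digits p \<and> length u \<le> h \<and> rep_pq p q n @ u \<in> L_pq p q
     then Some (\<tau> (delta_star \<delta> (delta_star \<delta> q0 (rep_pq p q n)) u)) else None)"
proof (cases "rep_pq p q n @ u \<in> L_pq p q")
  case True
  then obtain m where m: "rep_pq p q n @ u = rep_pq p q m"
    unfolding L_pq_def by blast
  have "x (nat \<lfloor>val_pq p q (rep_pq p q n @ u)\<rfloor>) = x m"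
    using rep_pq_spec m by simp
  also have "\<dots> = \<tau> (delta_star \<delta> q0 (rep_pq p q n @ u))"
    using automatic m by simp
  also have "\<dots> = \<tau> (delta_star \<delta> (delta_star \<delta> q0 (rep_pq p q n)) u)"
    by (simp add: delta_star_def)
  finally show ?thesis
    using True by (simp add: factor_pq_def)
qed (simp add: factor_pq_def)

lemma factor_pq_rep_pq_eq:
  assumes automatic: "\<And>n. x n = \<tau> (delta_star \<delta> q0 (rep_pq p q n))"
    and "0 < n" "0 < n'" and same_residue: "n mod q ^ h = n' mod q ^ h"
    and same_state: "delta_star \<delta> q0 (rep_pq p q n) = delta_star \<delta> q0 (rep_pq p q n')"
  shows "factor_pq p q x (rep_pq p q n) h = factor_pq p q x (rep_pq p q n') h"
proof
  fix u
  have "rep_pq p q n @ u \<in> L_pq p q \<longleftrightarrow> rep_pq p q n' @ u \<in> L_pq p q"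
    if "set u \<subseteq> digits p" "length u \<le> h"
  proof (rule rep_pq_append_in_L_pq_cong[OF assms(2,3) _ that(1)])
    have "q ^ length u dvd q ^ h"
      using that(2) by (rule le_imp_power_dvd)
    then show "n mod q ^ length u = n' mod q ^ length u"
      using same_residue by (metis mod_mod_cancel)
  qed
  then show "factor_pq p q x (rep_pq p q n) h u = factor_pq p q x (rep_pq p q n') h u"
    unfolding factor_pq_rep_pq[where x = x and \<tau> = \<tau>, OF automatic] same_state by auto
qed

end

lemma delta_star_closed:
  assumes "\<forall>s\<in>Q. \<forall>d\<in>digits p. \<delta> s d \<in> Q"
  shows "s \<in> Q \<Longrightarrow> set w \<subseteq> digits p \<Longrightarrow> delta_star \<delta> s w \<in> Q"
  unfolding delta_star_def using assms by (induction w arbitrary: s) auto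

lemma F_pq_eq_range: "F_pq p q x h = range (\<lambda>n. factor_pq p q x (rep_pq p q n) h)"
  by (auto simp: F_pq_def L_pq_def)

lemma card_image_le_if_factors_through:
  assumes "finite K" "key ` A \<subseteq> K"
    and "\<And>a b. a \<in> A \<Longrightarrow> b \<in> A \<Longrightarrow> key a = key b \<Longrightarrow> f a = f b"
  shows "finite (f ` A) \<and> card (f ` A) \<le> card K"
proof -
  define g where "g k = f (SOME a. a \<in> A \<and> key a = k)" for k
  have "f ` A \<subseteq> g ` K"
  proof
    fix b assume "b \<in> f ` A"
    then obtain a where "a \<in> A" "b = f a" by blast
    have "\<exists>a'. a' \<in> A \<and> key a' = key a"
      using \<open>a \<in> A\<close> by blast
    then have "(SOME a'. a' \<in> A \<and> key a' = key a) \<in> A \<and> key (SOME a'. a' \<in> A \<and> key a' = key a) = key a"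
      by (rule someI_ex)
    then have "b = g (key a)"
      unfolding g_def using assms(3) \<open>a \<in> A\<close> \<open>b = f a\<close> by metis
    then show "b \<in> g ` K"
      using assms(2) \<open>a \<in> A\<close> by blast
  qed
  then show ?thesis
    using assms(1) by (meson card_image_le card_mono finite_imageI finite_subset order_trans)
qed

theorem mainTheorem10:
  fixes p q :: nat and x :: "nat \<Rightarrow> 'b" and Q :: "'s set" and q0 :: 's
    and \<delta> :: "'s \<Rightarrow> nat \<Rightarrow> 's" and \<tau> :: "'s \<Rightarrow> 'b"
  assumes "p > q" and "q > 1" and "coprime p q"
    and "pq_automatic_via p q x Q q0 \<delta> \<tau>"
    and "h \<ge> 1"
  shows "finite (F_pq p q x h) \<and> card (F_pq p q x h) \<le> 1 + q ^ h * card Q"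
proof -
  have "finite Q" "q0 \<in> Q" and closed: "\<forall>s\<in>Q. \<forall>d\<in>digits p. \<delta> s d \<in> Q"
    and automatic: "\<And>n. x n = \<tau> (delta_star \<delta> q0 (rep_pq p q n))"
    using assms(4) unfolding pq_automatic_via_def by auto
  have "0 < q"
    using assms(2) by simp
  define key where
    "key n = (if n = 0 then None else Some (n mod q ^ h, delta_star \<delta> q0 (rep_pq p q n)))" for n
  define K where "K = insert None (Some ` ({..<q ^ h} \<times> Q))"
  have "finite K" and card_K: "card K = 1 + q ^ h * card Q"
    using \<open>finite Q\<close> by (simp_all add: K_def card_image card_cartesian_product)
  have key_range: "key ` UNIV \<subseteq> K"
    using \<open>0 < q\<close> rep_pq_spec[OF assms(3) \<open>0 < q\<close> assms(1)] delta_star_closed[OF closed \<open>q0 \<in> Q\<close>]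
    by (auto simp: key_def K_def normalized_word_def)
  have factor_via_key: "factor_pq p q x (rep_pq p q n) h = factor_pq p q x (rep_pq p q n') h"
    if "key n = key n'" for n n'
    using that factor_pq_rep_pq_eq[where x = x and \<tau> = \<tau>,
      OF assms(3) \<open>0 < q\<close> assms(1) automatic, of n n' h]
    by (auto simp: key_def split: if_splits)
  have "finite (F_pq p q x h) \<and> card (F_pq p q x h) \<le> card K"
    unfolding F_pq_eq_range
    by (rule card_image_le_if_factors_through[OF \<open>finite K\<close> key_range factor_via_key])
  then show ?thesis
    using card_K by simp
qed

end
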